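(* Let $V$ be an $\mathcal{L}[\frac12]$-module on which $c$ acts as $0$, with a basis $\{x_k\mid k\in\frac12\mathbb{Z}\}$ and constants $a,b\in\mathbb{C}$, $f_{p,k},g_{n,k}\in\mathbb{C}$ such that for all $p\in\frac12+\mathbb{Z}$, $n\in\mathbb{Z}$, $k\in\frac12\mathbb{Z}$: $Y_px_k=f_{p,k}x_{k+p}$, $M_nx_k=g_{n,k}x_{k+n}$, $L_nx_k=(a+k+bn)x_{k+n}$ if $k\in\mathbb{Z}$ and $L_nx_k=(a+k+(b+\frac12)n)x_{k+n}$ if $k\in\frac12+\mathbb{Z}$. Then for all $k,j\in\mathbb{Z}$ and $n,p\in\frac12+\mathbb{Z}$, $$(a+k+2bn)f_{p,j}=(a+j+2bp)f_{n,k},$$ and there exists $f_0\in\mathbb{C}$ such that $f_{p,j}=(a+j+2bp)f_0$ for all $j\in\mathbb{Z}$, $p\in\frac12+\mathbb{Z}$.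
   Context: $\mathcal{L}[\frac12]$ is the complex Lie algebra with basis $\{L_m,Y_p,M_n,c\mid m,n\in\mathbb{Z},\ p\in\frac12+\mathbb{Z}\}$ and brackets $[L_m,L_{m'}]=(m'-m)L_{m+m'}+\delta_{m,-m'}\frac{m^3-m}{12}c$, $[L_m,Y_p]=(p-\frac m2)Y_{p+m}$, $[L_m,M_n]=nM_{n+m}$, $[Y_p,Y_{p'}]=(p'-p)M_{p+p'}$, $[Y_p,M_n]=[M_n,M_{n'}]=0$, $c$ central. *)

theory Defs
  imports Complex_Main
begin

definition halfZ :: "rat set" where "halfZ = {k. 2 * k \<in> \<int>}"
definition halfodd :: "rat set" where "halfodd = {p. p - 1/2 \<in> \<int>}"

text \<open>A representation of the Lie algebra L[1/2] on the complex vector space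
  (V, sc) in which the central element c acts as 0. The operators are indexed by
  rationals: L m, M n for m, n in Z and Y p for p in 1/2 + Z.\<close>
definition L_half_module_c0 ::
  "(complex \<Rightarrow> 'v::ab_group_add \<Rightarrow> 'v) \<Rightarrow> (rat \<Rightarrow> 'v \<Rightarrow> 'v) \<Rightarrow> (rat \<Rightarrow> 'v \<Rightarrow> 'v)
     \<Rightarrow> (rat \<Rightarrow> 'v \<Rightarrow> 'v) \<Rightarrow> bool" where
  "L_half_module_c0 sc L Y M \<longleftrightarrow>
     vector_space sc \<and>
     (\<forall>m\<in>\<int>. Vector_Spaces.linear sc sc (L m)) \<and>
     (\<forall>p\<in>halfodd. Vector_Spaces.linear sc sc (Y p)) \<and>
     (\<forall>n\<in>\<int>. Vector_Spaces.linear sc sc (M n)) \<and>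
     (\<forall>m\<in>\<int>. \<forall>m'\<in>\<int>. \<forall>v.
        L m (L m' v) - L m' (L m v) = sc (of_rat (m' - m)) (L (m + m') v)) \<and>
     (\<forall>m\<in>\<int>. \<forall>p\<in>halfodd. \<forall>v.
        L m (Y p v) - Y p (L m v) = sc (of_rat (p - m / 2)) (Y (p + m) v)) \<and>
     (\<forall>m\<in>\<int>. \<forall>n\<in>\<int>. \<forall>v.
        L m (M n v) - M n (L m v) = sc (of_rat n) (M (n + m) v)) \<and>
     (\<forall>p\<in>halfodd. \<forall>p'\<in>halfodd. \<forall>v.
        Y p (Y p' v) - Y p' (Y p v) = sc (of_rat (p' - p)) (M (p + p') v)) \<and>
     (\<forall>p\<in>halfodd. \<forall>n\<in>\<int>. \<forall>v. Y p (M n v) = M n (Y p v)) \<and>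
     (\<forall>n\<in>\<int>. \<forall>n'\<in>\<int>. \<forall>v. M n (M n' v) = M n' (M n v))"

end

theory Submission
  imports Defs
begin

(* Write p = i + 1/2 and k = j with i, j integers, and put
   H i j = f (i + 1/2) j.  Applying the relation [L_m, Y_p] = (p - m/2) Y_{p+m}
   to the basis vector x_j and comparing coefficients of x_{j+p+m} gives a linear
   functional equation for H (the "Y-relation" below).  Everything then takes place
   in this equation:
   (1) the function  a + j + b(2i+1) = a + k + 2bp  solves it, and solutions form a
       vector space;
   (2) a solution with one vanishing row (fixed i) vanishes identically;
   (3) row 0 of a solution obeys the two-term recurrence
       (a+b+j+1) H 0 j = (a+b+j) H 0 (j+1); when a+b is no integer this pins the
       row down up to a scalar, and when a+b+z = 0 an explicit linear combination
       of fifteen instances of the equation links H 0 (z-1) to H 0 (z+1) across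
       the point where the recurrence degenerates.
   Hence every solution is a multiple of  a + j + b(2i+1)  (theorem
   Y_relation_solutions).  The last section derives the Y-relation from the module
   structure, and lemma3p3 follows by translating back to f. *)

section \<open>The functional equation for the coefficients of Y\<close>

text \<open>Defect of the Y-relation at (i, j, m): the coefficient relation obtained from
  [L_m, Y_(i+1/2)] acting on x_j, moved to one side.\<close>
definition Y_defect ::
  "complex \<Rightarrow> complex \<Rightarrow> (int \<Rightarrow> int \<Rightarrow> complex) \<Rightarrow> int \<Rightarrow> int \<Rightarrow> int \<Rightarrow> complex" where
  "Y_defect a b H i j m =
     H i j * (a + of_int j + of_int i + 1/2 + (b + 1/2) * of_int m)
     - (a + of_int j + b * of_int m) * H i (j + m)
     - (of_int i + 1/2 - of_int m / 2) * H (i + m) j"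

definition Y_relation :: "complex \<Rightarrow> complex \<Rightarrow> (int \<Rightarrow> int \<Rightarrow> complex) \<Rightarrow> bool" where
  "Y_relation a b H \<longleftrightarrow> (\<forall>i j m. Y_defect a b H i j m = 0)"

text \<open>The expected shape of the solutions: a + k + 2bp with k = j and p = i + 1/2.\<close>
definition Y_shape :: "complex \<Rightarrow> complex \<Rightarrow> int \<Rightarrow> int \<Rightarrow> complex" where
  "Y_shape a b i j = a + of_int j + b * (2 * of_int i + 1)"

lemma Y_relationD: "Y_relation a b H \<Longrightarrow> Y_defect a b H i j m = 0"
  unfolding Y_relation_def by blast

text \<open>The defect is linear in H and vanishes on the shape, so subtracting a multiple
  of the shape from a solution leaves a solution.\<close>
lemma Y_defect_shape: "Y_defect a b (Y_shape a b) i j m = 0"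
  unfolding Y_defect_def Y_shape_def by (simp add: algebra_simps)

lemma Y_relation_minus_shape:
  assumes "Y_relation a b H"
  shows "Y_relation a b (\<lambda>i j. H i j - l * Y_shape a b i j)"
proof -
  have "Y_defect a b (\<lambda>i j. H i j - l * Y_shape a b i j) i j m
      = Y_defect a b H i j m - l * Y_defect a b (Y_shape a b) i j m" for i j m
    unfolding Y_defect_def by (simp add: algebra_simps)
  then show ?thesis
    using assms Y_defect_shape unfolding Y_relation_def by simp
qed

text \<open>Taking (i0, j, i - i0) in the relation expresses row i through row i0, with
  coefficient i0 + 1/2 - (i - i0)/2, which vanishes only for i = 3 i0 + 1.\<close>
lemma Y_relation_row_zero_aux:
  assumes "Y_relation a b H" "\<And>j. H i0 j = 0" "i \<noteq> 3 * i0 + 1"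
  shows "H i j = 0"
proof -
  have "(of_int i0 + 1/2 - of_int (i - i0) / 2) * H i j = 0"
    using Y_relationD[OF assms(1), of i0 j "i - i0"] assms(2) by (simp add: Y_defect_def)
  moreover have "(of_int i0 + 1/2 - of_int (i - i0) / 2 :: complex) \<noteq> 0"
  proof
    assume "(of_int i0 + 1/2 - of_int (i - i0) / 2 :: complex) = 0"
    then have "(of_int (2 + i0 * 6) :: complex) = of_int (i * 2)" by (simp add: field_simps)
    then have "2 + i0 * 6 = i * 2" by (simp only: of_int_eq_iff)
    with assms(3) show False by simp
  qed
  ultimately show ?thesis by simp
qed

text \<open>A solution with one vanishing row vanishes: the exceptional row 3 i0 + 1 is
  reached through the row -i0 - 1 instead.\<close>
lemma Y_relation_row_zero:
  assumes "Y_relation a b H" "\<And>j. H i0 j = 0"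
  shows "H i j = 0"
proof (cases "i = 3 * i0 + 1")
  case True
  have "H (- i0 - 1) j' = 0" for j'
    by (rule Y_relation_row_zero_aux[OF assms]) presburger
  then show ?thesis
    by (rule Y_relation_row_zero_aux[OF assms(1)]) (use True in presburger)
qed (rule Y_relation_row_zero_aux[OF assms])

lemma Y_relation_row0_recurrence:
  assumes "Y_relation a b H"
  shows "(a + b + of_int j + 1) * H 0 j = (a + b + of_int j) * H 0 (j + 1)"
  using Y_relationD[OF assms, of 0 j 1] by (simp add: Y_defect_def algebra_simps)

text \<open>When a + b + z = 0 the recurrence cannot cross z.  This explicit combination of
  instances of the relation bridges the gap: it writes H 0 (z-1) in terms of
  H 0 (z+1) and defects, uniformly in b.\<close>
lemma Y_defect_bridge:
  assumes "a + b + of_int z = 0"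
  shows "H 0 (z - 1) =
      3/4 * Y_defect a b H (-2) z 1 - 1/2 * Y_defect a b H (-1) (z - 1) 1
    - 1/2 * Y_defect a b H (-1) (z - 1) 2 + 1/4 * Y_defect a b H (-1) z (-1)
    - Y_defect a b H (-1) z 1 - 1/2 * Y_defect a b H (-1) z 2
    + 1/2 * Y_defect a b H (-1) (z + 1) (-1) + 1/4 * Y_defect a b H (-1) (z + 1) 1
    + 1/4 * Y_defect a b H (-1) (z + 2) (-1) + 3/4 * Y_defect a b H 0 (z - 2) 1
    + 3/4 * Y_defect a b H 0 (z - 1) (-1) + 3/2 * Y_defect a b H 0 (z - 1) 2
    - 1/2 * Y_defect a b H 0 z (-2) - 3/4 * Y_defect a b H 0 (z + 1) (-1)
    + 3/4 * Y_defect a b H 1 (z - 1) 1 - H 0 (z + 1)"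
proof -
  have a: "a = - b - of_int z" using assms by (simp add: algebra_simps eq_neg_iff_add_eq_0)
  show ?thesis unfolding Y_defect_def a by (simp add: algebra_simps)
qed

lemma Y_relation_bridge:
  assumes "Y_relation a b H" "a + b + of_int z = 0" "H 0 (z + 1) = 0"
  shows "H 0 (z - 1) = 0"
  using Y_defect_bridge[OF assms(2), of H] Y_relationD[OF assms(1)] assms(3) by simp

section \<open>Vanishing of solutions of a two-term recurrence\<close>

text \<open>A solution of (c + j + 1) D j = (c + j) D (j + 1) that vanishes on [lo, hi]
  vanishes everywhere, provided c + j avoids 0 for j \<le> lo and for j \<ge> hi (these
  are the coefficients that must be divided by when moving outwards).\<close>
lemma recurrence_vanishes:
  fixes D :: "int \<Rightarrow> complex" and c :: complex
  assumes rec: "\<And>j. (c + of_int j + 1) * D j = (c + of_int j) * D (j + 1)"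
    and nz: "\<And>j. j \<le> lo \<or> hi \<le> j \<Longrightarrow> c + of_int j \<noteq> 0"
    and zero: "\<And>j. lo \<le> j \<Longrightarrow> j \<le> hi \<Longrightarrow> D j = 0"
    and "lo \<le> hi"
  shows "D j = 0"
proof -
  consider "hi \<le> j" | "j \<le> lo" | "lo \<le> j \<and> j \<le> hi" by linarith
  then show ?thesis
  proof cases
    case 1
    then show ?thesis
    proof (induction j rule: int_ge_induct)
      case base show ?case using zero \<open>lo \<le> hi\<close> by simp
    next
      case (step i)
      have "(c + of_int i) * D (i + 1) = 0" using rec[of i] step.IH by simp
      then show ?case using nz[of i] step.hyps by simp
    qed
  next
    case 2
    then show ?thesis
    proof (induction j rule: int_le_induct)
      case base show ?case using zero \<open>lo \<le> hi\<close> by simp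
    next
      case (step i)
      have "(c + of_int i) * D (i - 1) = 0" using rec[of "i - 1"] step.IH by simp
      then show ?case using nz[of i] step.hyps by simp
    qed
  next
    case 3
    then show ?thesis using zero by simp
  qed
qed

section \<open>Solutions of the Y-relation\<close>

text \<open>If a + b is not an integer the
  recurrence determines the row from H 0 0; otherwise, with a + b + z = 0, it is
  determined by H 0 (z+1) together with the bridge across z.\<close>
lemma Y_relation_row0:
  assumes sol: "Y_relation a b G"
  shows "\<exists>l. \<forall>j. G 0 j = l * Y_shape a b 0 j"
proof -
  have shape0: "Y_shape a b 0 j = a + b + of_int j" for j by (simp add: Y_shape_def)
  have row_zero: "\<exists>l. \<forall>j. G 0 j = l * Y_shape a b 0 j"
    if lo_hi: "lo \<le> hi"
      and nz: "\<And>j. j \<le> lo \<or> hi \<le> j \<Longrightarrow> a + b + of_int j \<noteq> 0"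
      and zero: "\<And>j. lo \<le> j \<Longrightarrow> j \<le> hi \<Longrightarrow> G 0 j - l * Y_shape a b 0 j = 0"
    for l lo hi
  proof -
    have "Y_relation a b (\<lambda>i j. G i j - l * Y_shape a b i j)"
      by (rule Y_relation_minus_shape[OF sol])
    from Y_relation_row0_recurrence[OF this]
    have "G 0 j - l * Y_shape a b 0 j = 0" for j
      by (rule recurrence_vanishes[where D = "\<lambda>j. G 0 j - l * Y_shape a b 0 j"])
        (use nz zero lo_hi in auto)
    then show ?thesis by auto
  qed
  show ?thesis
  proof (cases "\<exists>z. a + b + of_int z = 0")
    case False
    then have "a + b + of_int j \<noteq> 0" for j by blast
    moreover from this[of 0] have "G 0 0 - G 0 0 / (a + b) * Y_shape a b 0 0 = 0"
      by (simp add: shape0)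
    ultimately show ?thesis by (intro row_zero[of 0 0 "G 0 0 / (a + b)"]) auto
  next
    case True
    then obtain z where z: "a + b + of_int z = 0" by blast
    define l where "l = G 0 (z + 1)"
    define H where "H = (\<lambda>i j. G i j - l * Y_shape a b i j)"
    have solH: "Y_relation a b H"
      unfolding H_def by (rule Y_relation_minus_shape[OF sol])
    have shape_z: "Y_shape a b 0 j = of_int (j - z)" for j
      using z by (simp add: shape0 algebra_simps)
    have H_above: "H 0 (z + 1) = 0" by (simp add: H_def l_def shape_z)
    have H_at: "H 0 z = 0"
      using Y_relation_row0_recurrence[OF solH, of z] H_above z by simp
    have H_below: "H 0 (z - 1) = 0"
      by (rule Y_relation_bridge[OF solH z H_above])
    have "G 0 j - l * Y_shape a b 0 j = 0" if "z - 1 \<le> j" "j \<le> z + 1" for j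
    proof -
      from that consider "j = z - 1" | "j = z" | "j = z + 1" by linarith
      then show ?thesis using H_above H_at H_below unfolding H_def by cases auto
    qed
    moreover have "a + b + of_int j \<noteq> 0" if "j \<le> z - 1 \<or> z + 1 \<le> j" for j
      using that shape_z[of j] by (auto simp: shape0)
    ultimately show ?thesis by (intro row_zero[of "z - 1" "z + 1" l]) auto
  qed
qed

theorem Y_relation_solutions:
  assumes sol: "Y_relation a b G"
  shows "\<exists>l. \<forall>i j. G i j = l * Y_shape a b i j"
proof -
  obtain l where row0: "\<And>j. G 0 j = l * Y_shape a b 0 j"
    using Y_relation_row0[OF sol] by blast
  have "G i j - l * Y_shape a b i j = 0" for i j
    using Y_relation_row_zero[OF Y_relation_minus_shape[OF sol, of l], of 0 i j] row0 by simp
  then show ?thesis by auto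
qed

section \<open>From the module to the Y-relation\<close>

lemma linear_scale: "Vector_Spaces.linear s s f \<Longrightarrow> f (s r v) = s r (f v)"
  by (simp add: module_hom_iff_linear[symmetric] module_hom.scale)

lemma halfodd_int: "p \<in> halfodd \<Longrightarrow> \<exists>i::int. p = of_int i + 1/2"
  unfolding halfodd_def by (auto elim!: Ints_cases) (metis add.commute diff_add_cancel)

lemma halfodd_of_int: "of_int i + 1/2 \<in> halfodd"
  unfolding halfodd_def by simp

lemma Ints_halfZ: "(k::rat) \<in> \<int> \<Longrightarrow> k \<in> halfZ"
  unfolding halfZ_def by simp

lemma halfodd_halfZ:
  assumes "p \<in> halfodd" shows "p \<in> halfZ"
proof -
  from assms obtain n where "p - 1/2 = of_int n" unfolding halfodd_def by (auto elim: Ints_cases)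
  then have "2 * p = of_int (2 * n + 1)" by (simp add: field_simps)
  then show ?thesis unfolding halfZ_def by (metis Ints_of_int mem_Collect_eq)
qed

lemma halfodd_add_Ints:
  assumes "p \<in> halfodd" "(m::rat) \<in> \<int>" shows "p + m \<in> halfodd"
proof -
  have "(p - 1/2) + m \<in> \<int>" using assms unfolding halfodd_def by (intro Ints_add) auto
  then show ?thesis unfolding halfodd_def by (simp add: algebra_simps)
qed

lemma independent_family_nonzero:
  assumes "module sc" "\<not> module.dependent sc (x ` S)" "k \<in> S"
  shows "x k \<noteq> 0"
  using assms module.dependent_zero[OF assms(1)] by force

text \<open>Comparing the coefficients of x_(j+p+m) in L_m Y_p x_j - Y_p L_m x_j =
  (p - m/2) Y_(p+m) x_j, for j, m integers and p in 1/2 + Z.\<close>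
lemma module_Y_coefficients:
  fixes sc :: "complex \<Rightarrow> 'v::ab_group_add \<Rightarrow> 'v"
  assumes module: "L_half_module_c0 sc L Y M"
    and x_nonzero: "\<And>k. k \<in> halfZ \<Longrightarrow> x k \<noteq> 0"
    and Y_act: "\<And>p k. p \<in> halfodd \<Longrightarrow> k \<in> halfZ \<Longrightarrow> Y p (x k) = sc (f p k) (x (k + p))"
    and L_act_int: "\<And>n k. n \<in> \<int> \<Longrightarrow> k \<in> \<int> \<Longrightarrow>
           L n (x k) = sc (a + of_rat k + b * of_rat n) (x (k + n))"
    and L_act_half: "\<And>n k. n \<in> \<int> \<Longrightarrow> k \<in> halfodd \<Longrightarrow>
           L n (x k) = sc (a + of_rat k + (b + 1/2) * of_rat n) (x (k + n))"
    and p: "p \<in> halfodd" and j: "j \<in> \<int>" and m: "m \<in> \<int>"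
  shows "f p j * (a + of_rat (j + p) + (b + 1/2) * of_rat m) - (a + of_rat j + b * of_rat m) * f p (j + m)
       = of_rat (p - m / 2) * f (p + m) j"
proof -
  have vs: "vector_space sc" and linL: "Vector_Spaces.linear sc sc (L m)"
    and linY: "Vector_Spaces.linear sc sc (Y p)"
    and LY: "L m (Y p (x j)) - Y p (L m (x j)) = sc (of_rat (p - m / 2)) (Y (p + m) (x j))"
    using module p m by (simp_all add: L_half_module_c0_def)
  interpret vector_space sc by (rule vs)
  have jp: "j + p \<in> halfodd" using halfodd_add_Ints[OF p j] by (simp add: add.commute)
  define X where "X = x (j + p + m)"
  have X_reorder: "x (j + m + p) = X" "x (j + (p + m)) = X" by (simp_all add: X_def algebra_simps)
  have X_nonzero: "X \<noteq> 0" unfolding X_def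
    by (rule x_nonzero) (use halfodd_halfZ[OF halfodd_add_Ints[OF jp m]] in simp)
  have "L m (Y p (x j)) = sc (f p j * (a + of_rat (j + p) + (b + 1/2) * of_rat m)) X"
    using Y_act[OF p Ints_halfZ[OF j]] linear_scale[OF linL] L_act_half[OF m jp]
    by (simp add: X_def)
  moreover have "Y p (L m (x j)) = sc ((a + of_rat j + b * of_rat m) * f p (j + m)) X"
    using L_act_int[OF m j] linear_scale[OF linY] Y_act[OF p Ints_halfZ[OF Ints_add[OF j m]]]
    by (simp add: X_reorder mult.commute)
  moreover have "Y (p + m) (x j) = sc (f (p + m) j) X"
    using Y_act[OF halfodd_add_Ints[OF p m] Ints_halfZ[OF j]] by (simp add: X_reorder)
  ultimately have "sc (f p j * (a + of_rat (j + p) + (b + 1/2) * of_rat m)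
        - (a + of_rat j + b * of_rat m) * f p (j + m)) X = sc (of_rat (p - m / 2) * f (p + m) j) X"
    using LY by (simp add: scale_left_diff_distrib)
  then show ?thesis using X_nonzero by simp
qed

lemma module_Y_relation:
  assumes coeff: "\<And>p j m. p \<in> halfodd \<Longrightarrow> j \<in> \<int> \<Longrightarrow> m \<in> \<int> \<Longrightarrow>
      f p j * (a + of_rat (j + p) + (b + 1/2) * of_rat m) - (a + of_rat j + b * of_rat m) * f p (j + m)
       = of_rat (p - m / 2) * f (p + m) j"
  shows "Y_relation a b (\<lambda>i j. f (of_int i + 1/2) (of_int j))"
  unfolding Y_relation_def Y_defect_def
proof (intro allI)
  fix i j m :: int
  have p: "(of_int i + 1/2) + of_int m = (of_int (i + m) + 1/2 :: rat)"
    and jm: "(of_int j + of_int m :: rat) = of_int (j + m)"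
    and jp: "(of_rat (of_int j + (of_int i + 1/2)) :: complex) = of_int j + of_int i + 1/2"
    and pm: "(of_rat ((of_int i + 1/2) - of_int m / 2) :: complex) = of_int i + 1/2 - of_int m / 2"
    by (simp_all add: of_rat_add of_rat_diff of_rat_divide)
  have "f (of_int i + 1/2) (of_int j) * (a + of_rat (of_int j + (of_int i + 1/2)) + (b + 1/2) * of_rat (of_int m))
      - (a + of_rat (of_int j) + b * of_rat (of_int m)) * f (of_int i + 1/2) (of_int j + of_int m)
      = of_rat ((of_int i + 1/2) - of_int m / 2) * f ((of_int i + 1/2) + of_int m) (of_int j)"
    by (rule coeff) (simp_all add: halfodd_of_int)
  then show "f (of_int i + 1/2) (of_int j) * (a + of_int j + of_int i + 1/2 + (b + 1/2) * of_int m)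
      - (a + of_int j + b * of_int m) * f (of_int i + 1/2) (of_int (j + m))
      - (of_int i + 1/2 - of_int m / 2) * f (of_int (i + m) + 1/2) (of_int j) = 0"
    unfolding p jm jp pm by (simp add: add.assoc)
qed

lemma Y_shape_of_rat:
  assumes f0: "\<And>i j. f (of_int i + 1/2) (of_int j) = f0 * Y_shape a b i j"
    and j: "j \<in> \<int>" and p: "p \<in> halfodd"
  shows "f p j = (a + of_rat j + 2 * b * of_rat p) * f0"
proof -
  obtain i where i: "p = of_int i + 1/2" using halfodd_int[OF p] by blast
  obtain jj where jj: "j = of_int jj" using j by (auto elim: Ints_cases)
  show ?thesis
    using f0[of i jj] unfolding i jj Y_shape_def by (simp add: of_rat_add of_rat_divide algebra_simps)
qed

theorem lemma3p3:
  fixes sc :: "complex \<Rightarrow> 'v::ab_group_add \<Rightarrow> 'v"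
    and L Y M :: "rat \<Rightarrow> 'v \<Rightarrow> 'v"
    and x :: "rat \<Rightarrow> 'v"
    and a b :: complex
    and f g :: "rat \<Rightarrow> rat \<Rightarrow> complex"
  assumes module: "L_half_module_c0 sc L Y M"
    and basis_inj: "inj_on x halfZ"
    and basis_indep: "\<not> module.dependent sc (x ` halfZ)"
    and basis_span: "module.span sc (x ` halfZ) = UNIV"
    and Y_act: "\<And>p k. p \<in> halfodd \<Longrightarrow> k \<in> halfZ \<Longrightarrow> Y p (x k) = sc (f p k) (x (k + p))"
    and M_act: "\<And>n k. n \<in> \<int> \<Longrightarrow> k \<in> halfZ \<Longrightarrow> M n (x k) = sc (g n k) (x (k + n))"
    and L_act_int: "\<And>n k. n \<in> \<int> \<Longrightarrow> k \<in> \<int> \<Longrightarrow>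
           L n (x k) = sc (a + of_rat k + b * of_rat n) (x (k + n))"
    and L_act_half: "\<And>n k. n \<in> \<int> \<Longrightarrow> k \<in> halfodd \<Longrightarrow>
           L n (x k) = sc (a + of_rat k + (b + 1/2) * of_rat n) (x (k + n))"
  shows "(\<forall>k\<in>\<int>. \<forall>j\<in>\<int>. \<forall>n\<in>halfodd. \<forall>p\<in>halfodd.
            (a + of_rat k + 2 * b * of_rat n) * f p j = (a + of_rat j + 2 * b * of_rat p) * f n k)
       \<and> (\<exists>f0. \<forall>j\<in>\<int>. \<forall>p\<in>halfodd. f p j = (a + of_rat j + 2 * b * of_rat p) * f0)"
proof -
  have "vector_space sc" using module unfolding L_half_module_c0_def by (rule conjunct1)
  then have "module sc" by (simp add: module_iff_vector_space)
  have "Y_relation a b (\<lambda>i j. f (of_int i + 1/2) (of_int j))"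
    by (rule module_Y_relation[OF module_Y_coefficients[OF module
          independent_family_nonzero[OF \<open>module sc\<close> basis_indep] Y_act L_act_int L_act_half]])
  then obtain f0 where "\<And>i j. f (of_int i + 1/2) (of_int j) = f0 * Y_shape a b i j"
    using Y_relation_solutions by blast
  then have shape: "\<And>j p. j \<in> \<int> \<Longrightarrow> p \<in> halfodd \<Longrightarrow> f p j = (a + of_rat j + 2 * b * of_rat p) * f0"
    by (rule Y_shape_of_rat)
  show ?thesis
  proof
    show "\<forall>k\<in>\<int>. \<forall>j\<in>\<int>. \<forall>n\<in>halfodd. \<forall>p\<in>halfodd.
        (a + of_rat k + 2 * b * of_rat n) * f p j = (a + of_rat j + 2 * b * of_rat p) * f n k"
      using shape by (simp add: algebra_simps)
    show "\<exists>f0. \<forall>j\<in>\<int>. \<forall>p\<in>halfodd. f p j = (a + of_rat j + 2 * b * of_rat p) * f0"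
      using shape by blast
  qed
qed

end
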